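(* Suppose $f:\{0,1\}^n\to\{0,1\}$ is $\varepsilon$-far from every $k$-junta. Then for every quantum $k$-junta $V\in\mathcal{U}_N$ there exists a Boolean function $g:\{0,1\}^n\to\{0,1\}$ that is a $k$-junta such that $\mathrm{dist}(V,U_g)\le\mathrm{dist}(V,U_f)$, where $U_h:=\mathrm{diag}\big((-1)^{h(x)}\big)_{x\in\{0,1\}^n}$ for a Boolean function $h$.
   Context: $N=2^n$, $\mathcal{U}_N$ is the set of $N\times N$ unitaries. A Boolean function $h$ is a $k$-junta if $h(x)=g'(x_{i_1},\dots,x_{i_k})$ for some $g':\{0,1\}^k\to\{0,1\}$ and fixed indices; $f$ is $\varepsilon$-far from every $k$-junta if $\Pr_{x\sim\{0,1\}^n}[f(x)\ne g(x)]\ge\varepsilon$ for every $k$-junta $g$ ($x$ uniform). A unitary $V\in\mathcal{U}_N$ is a quantum $k$-junta if $V=W_S\otimes I_{\overline{S}}$ for some $S\subseteq[n]$ with $|S|=k$ and $W_S\in\mathcal{U}_{2^k}$ acting on the qubits in $S$. For $A,B\in\mathbb{C}^{N\times N}$, $\mathrm{dist}(A,B):=\min_{\theta\in[0,2\pi)}\frac{1}{\sqrt{2N}}\|e^{i\theta}A-B\|$ with $\|\cdot\|$ the Frobenius norm. *)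

theory Defs
  imports Complex_Main
begin

text \<open>Bit strings x in {0,1}^n are modelled as functions nat => bool that are False
  outside {0..<n}; True encodes the bit 1.\<close>
definition cube :: "nat \<Rightarrow> (nat \<Rightarrow> bool) set" where
  "cube n = {x. \<forall>i\<ge>n. \<not> x i}"

text \<open>An N x N complex matrix (N = 2^n) is a function indexed by pairs of bit strings
  in cube n (values outside are irrelevant). Unitary: V^* V = I and V V^* = I on carrier C.\<close>
definition unitary_on :: "(nat \<Rightarrow> bool) set \<Rightarrow> ((nat \<Rightarrow> bool) \<Rightarrow> (nat \<Rightarrow> bool) \<Rightarrow> complex) \<Rightarrow> bool" where
  "unitary_on C V \<longleftrightarrow>
     (\<forall>x\<in>C. \<forall>y\<in>C. (\<Sum>z\<in>C. cnj (V z x) * V z y) = (if x = y then 1 else 0)) \<and>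
     (\<forall>x\<in>C. \<forall>y\<in>C. (\<Sum>z\<in>C. V x z * cnj (V y z)) = (if x = y then 1 else 0))"

definition unitary_mat :: "nat \<Rightarrow> ((nat \<Rightarrow> bool) \<Rightarrow> (nat \<Rightarrow> bool) \<Rightarrow> complex) \<Rightarrow> bool" where
  "unitary_mat n V \<longleftrightarrow> unitary_on (cube n) V"

definition bool_junta :: "nat \<Rightarrow> nat \<Rightarrow> ((nat \<Rightarrow> bool) \<Rightarrow> bool) \<Rightarrow> bool" where
  "bool_junta n k h \<longleftrightarrow>
     (\<exists>idx :: nat \<Rightarrow> nat. \<exists>g' :: (nat \<Rightarrow> bool) \<Rightarrow> bool.
        (\<forall>j<k. idx j < n) \<and>
        (\<forall>x\<in>cube n. h x = g' (\<lambda>j. j < k \<and> x (idx j))))"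

definition disagree :: "nat \<Rightarrow> ((nat \<Rightarrow> bool) \<Rightarrow> bool) \<Rightarrow> ((nat \<Rightarrow> bool) \<Rightarrow> bool) \<Rightarrow> real" where
  "disagree n f g = real (card {x\<in>cube n. f x \<noteq> g x}) / 2 ^ n"

definition far_from_juntas :: "nat \<Rightarrow> nat \<Rightarrow> real \<Rightarrow> ((nat \<Rightarrow> bool) \<Rightarrow> bool) \<Rightarrow> bool" where
  "far_from_juntas n k \<epsilon> f \<longleftrightarrow> (\<forall>g. bool_junta n k g \<longrightarrow> disagree n f g \<ge> \<epsilon>)"

text \<open>Quantum k-junta: V = W_S (x) I_{complement S}, |S| = k, W_S unitary on the qubits in S.
  W_S is indexed by assignments to S (functions False outside S).\<close>
definition restrict_bits :: "nat set \<Rightarrow> (nat \<Rightarrow> bool) \<Rightarrow> (nat \<Rightarrow> bool)" where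
  "restrict_bits S x = (\<lambda>i. i \<in> S \<and> x i)"

definition quantum_junta :: "nat \<Rightarrow> nat \<Rightarrow> ((nat \<Rightarrow> bool) \<Rightarrow> (nat \<Rightarrow> bool) \<Rightarrow> complex) \<Rightarrow> bool" where
  "quantum_junta n k V \<longleftrightarrow>
     (\<exists>S W. S \<subseteq> {0..<n} \<and> card S = k \<and>
        unitary_on {a. \<forall>i. a i \<longrightarrow> i \<in> S} W \<and>
        (\<forall>x\<in>cube n. \<forall>y\<in>cube n.
           V x y = W (restrict_bits S x) (restrict_bits S y) *
                   (if restrict_bits (- S) x = restrict_bits (- S) y then 1 else 0)))"

definition frob :: "nat \<Rightarrow> ((nat \<Rightarrow> bool) \<Rightarrow> (nat \<Rightarrow> bool) \<Rightarrow> complex) \<Rightarrow> real" where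
  "frob n A = sqrt (\<Sum>x\<in>cube n. \<Sum>y\<in>cube n. (cmod (A x y))\<^sup>2)"

definition qdist :: "nat \<Rightarrow> ((nat \<Rightarrow> bool) \<Rightarrow> (nat \<Rightarrow> bool) \<Rightarrow> complex) \<Rightarrow> ((nat \<Rightarrow> bool) \<Rightarrow> (nat \<Rightarrow> bool) \<Rightarrow> complex) \<Rightarrow> real" where
  "qdist n A B = (INF \<theta>\<in>{0..<2*pi}. (1 / sqrt (2 * 2 ^ n)) * frob n (\<lambda>x y. exp (\<i> * of_real \<theta>) * A x y - B x y))"

definition phase_oracle :: "((nat \<Rightarrow> bool) \<Rightarrow> bool) \<Rightarrow> (nat \<Rightarrow> bool) \<Rightarrow> (nat \<Rightarrow> bool) \<Rightarrow> complex" where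
  "phase_oracle h x y = (if x = y then (if h x then -1 else 1) else 0)"

end

theory Submission
  imports Defs
begin

text \<open>For a unit scalar e, \<open>\<parallel>e A - U\<^sub>h\<parallel>\<^sup>2 = \<parallel>A\<parallel>\<^sup>2 + N - 2 Re (e Tr (U\<^sub>h A))\<close>, so minimising
  over the phase e shows that \<open>dist(A, U\<^sub>h)\<close> is a decreasing function of
  \<open>|Tr (U\<^sub>h A)| = |\<Sum>\<^sub>x (-1)^h(x) A x x|\<close> (\<open>phase_trace\<close> below). Rotate \<open>Tr (U\<^sub>f V)\<close> onto the
  positive reals by a phase u and let g(x) be the sign choice making each term
  \<open>(-1)^g(x) Re (u V x x)\<close> nonnegative; this can only increase the modulus. For a quantum
  k-junta \<open>V = W\<^sub>S \<otimes> I\<close> the diagonal entry V x x depends only on the bits of x in S, hence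
  so does g, which is therefore a k-junta.\<close>

lemma finite_cube: "finite (cube n)"
proof -
  have "cube n \<subseteq> (\<lambda>A i. i \<in> A) ` Pow {0..<n}"
  proof
    fix x assume "x \<in> cube n"
    hence "x = (\<lambda>i. i \<in> {i. x i})" "{i. x i} \<in> Pow {0..<n}"
      by (auto simp: cube_def) (meson not_le)
    thus "x \<in> (\<lambda>A i. i \<in> A) ` Pow {0..<n}" by blast
  qed
  thus ?thesis by (rule finite_subset) simp
qed

lemma bool_junta_restrict_bits:
  assumes "S \<subseteq> {0..<n}" and "card S = k"
  shows "bool_junta n k (\<lambda>x. G (restrict_bits S x))"
proof -
  obtain idx where idx: "bij_betw idx {0..<k} S"
    using ex_bij_betw_nat_finite[OF finite_subset[OF assms(1)]] assms(2) by blast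
  define G' where "G' b = G (\<lambda>i. i \<in> S \<and> b (inv_into {0..<k} idx i))" for b :: "nat \<Rightarrow> bool"
  have "restrict_bits S x = (\<lambda>i. i \<in> S \<and> (\<lambda>j. j < k \<and> x (idx j)) (inv_into {0..<k} idx i))" for x
  proof
    fix i
    show "restrict_bits S x i = (i \<in> S \<and> (\<lambda>j. j < k \<and> x (idx j)) (inv_into {0..<k} idx i))"
      using inv_into_into[of i idx "{0..<k}"] bij_betw_inv_into_right[OF idx, of i]
        bij_betw_imp_surj_on[OF idx]
      by (auto simp: restrict_bits_def)
  qed
  hence "G (restrict_bits S x) = G' (\<lambda>j. j < k \<and> x (idx j))" for x
    unfolding G'_def by simp
  moreover have "\<forall>j<k. idx j < n"
    using bij_betw_apply[OF idx] assms(1) by force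
  ultimately show ?thesis unfolding bool_junta_def by blast
qed

lemma quantum_junta_diagonal:
  assumes "quantum_junta n k V"
  obtains S G where "S \<subseteq> {0..<n}" "card S = k"
    "\<And>x. x \<in> cube n \<Longrightarrow> V x x = G (restrict_bits S x)"
proof -
  obtain S W where "S \<subseteq> {0..<n}" "card S = k"
    and "\<forall>x\<in>cube n. \<forall>y\<in>cube n. V x y = W (restrict_bits S x) (restrict_bits S y) *
           (if restrict_bits (- S) x = restrict_bits (- S) y then 1 else 0)"
    using assms unfolding quantum_junta_def by blast
  thus thesis by (intro that[of S "\<lambda>a. W a a"]) auto
qed

definition phase_trace ::
    "nat \<Rightarrow> ((nat \<Rightarrow> bool) \<Rightarrow> (nat \<Rightarrow> bool) \<Rightarrow> complex) \<Rightarrow> ((nat \<Rightarrow> bool) \<Rightarrow> bool) \<Rightarrow> complex"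
  where "phase_trace n A h = (\<Sum>x\<in>cube n. (if h x then - A x x else A x x))"

lemma cmod_diff_squared: "(cmod (z - w))\<^sup>2 = (cmod z)\<^sup>2 + (cmod w)\<^sup>2 - 2 * Re (z * cnj w)"
  unfolding cmod_power2 by (simp add: power2_eq_square algebra_simps)

lemma frob_squared: "(frob n A)\<^sup>2 = (\<Sum>x\<in>cube n. \<Sum>y\<in>cube n. (cmod (A x y))\<^sup>2)"
  unfolding frob_def by (rule real_sqrt_pow2) (intro sum_nonneg, simp)

lemma frob_nonneg: "frob n A \<ge> 0"
  unfolding frob_def by (simp add: sum_nonneg)

lemma frob_rotated_minus_phase_oracle_squared:
  assumes "cmod e = 1"
  shows "(frob n (\<lambda>x y. e * A x y - phase_oracle h x y))\<^sup>2 =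
     (frob n A)\<^sup>2 + real (card (cube n)) - 2 * Re (e * phase_trace n A h)"
proof -
  define c where "c x = 1 - 2 * Re (e * (if h x then - A x x else A x x))" for x
  have entry: "(cmod (e * A x y - phase_oracle h x y))\<^sup>2 =
      (cmod (A x y))\<^sup>2 + (if x = y then c x else 0)" for x y
    unfolding cmod_diff_squared c_def phase_oracle_def using assms by (auto simp: norm_mult)
  have "(frob n (\<lambda>x y. e * A x y - phase_oracle h x y))\<^sup>2
      = (\<Sum>x\<in>cube n. (\<Sum>y\<in>cube n. (cmod (A x y))\<^sup>2) + c x)"
    unfolding frob_squared entry by (simp add: sum.distrib finite_cube)
  also have "\<dots> = (frob n A)\<^sup>2 + (\<Sum>x\<in>cube n. c x)"
    by (simp add: sum.distrib frob_squared)
  also have "(\<Sum>x\<in>cube n. c x) = real (card (cube n)) - 2 * Re (e * phase_trace n A h)"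
    unfolding c_def phase_trace_def
    by (simp add: sum_subtractf Re_sum flip: sum_distrib_left)
  finally show ?thesis by simp
qed

lemma exists_phase_rotating_to_modulus:
  "\<exists>\<theta>\<in>{0..<2*pi}. exp (\<i> * of_real \<theta>) * z = of_real (cmod z)"
proof (cases "z = 0")
  case True
  thus ?thesis by (intro bexI[of _ 0]) auto
next
  case False
  have "z = of_real (cmod z) * sgn z"
    using False by (simp add: sgn_div_norm scaleR_conv_of_real)
  hence z: "z = of_real (cmod z) * cis (Arg z)" and Arg: "-pi < Arg z" "Arg z \<le> pi"
    using Arg_correct[OF False] by auto
  define \<theta> where "\<theta> = (if Arg z \<le> 0 then - Arg z else 2*pi - Arg z)"
  have "cis \<theta> = cis (- Arg z)"
    unfolding \<theta>_def by (simp add: complex_eq_iff)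
  hence "exp (\<i> * of_real \<theta>) = cis (- Arg z)"
    by (simp add: cis_conv_exp mult.commute)
  hence "exp (\<i> * of_real \<theta>) * z = of_real (cmod z)"
    by (subst z) (simp add: mult.left_commute cis_mult)
  moreover have "\<theta> \<in> {0..<2*pi}" using Arg unfolding \<theta>_def by auto
  ultimately show ?thesis by blast
qed

lemma qdist_phase_oracle:
  "qdist n A (phase_oracle h) = (1 / sqrt (2 * 2 ^ n)) *
     sqrt ((frob n A)\<^sup>2 + real (card (cube n)) - 2 * cmod (phase_trace n A h))"
  (is "_ = ?d")
proof (rule antisym)
  obtain \<theta> where \<theta>: "\<theta> \<in> {0..<2*pi}"
    and rotated: "exp (\<i> * of_real \<theta>) * phase_trace n A h = of_real (cmod (phase_trace n A h))"
    using exists_phase_rotating_to_modulus by blast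
  have "qdist n A (phase_oracle h) \<le>
      (1 / sqrt (2 * 2 ^ n)) * frob n (\<lambda>x y. exp (\<i> * of_real \<theta>) * A x y - phase_oracle h x y)"
    unfolding qdist_def
    by (rule cINF_lower[OF _ \<theta>], rule bdd_belowI[of _ 0]) (auto simp: frob_nonneg)
  also have "\<dots> = ?d"
    by (subst real_sqrt_unique[symmetric, OF frob_rotated_minus_phase_oracle_squared frob_nonneg])
      (simp_all add: rotated)
  finally show "qdist n A (phase_oracle h) \<le> ?d" .
next
  show "?d \<le> qdist n A (phase_oracle h)"
    unfolding qdist_def
  proof (rule cINF_greatest)
    show "{0..<2*pi} \<noteq> {}" by simp
  next
    fix \<theta> :: real
    let ?e = "exp (\<i> * of_real \<theta>)"
    have "Re (?e * phase_trace n A h) \<le> cmod (?e * phase_trace n A h)"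
      by (rule complex_Re_le_cmod)
    hence "Re (?e * phase_trace n A h) \<le> cmod (phase_trace n A h)"
      by (simp add: norm_mult)
    hence "sqrt ((frob n A)\<^sup>2 + real (card (cube n)) - 2 * cmod (phase_trace n A h))
        \<le> frob n (\<lambda>x y. ?e * A x y - phase_oracle h x y)"
      by (subst real_sqrt_unique[symmetric, OF frob_rotated_minus_phase_oracle_squared frob_nonneg])
        simp_all
    thus "?d \<le> 1 / sqrt (2 * 2 ^ n) * frob n (\<lambda>x y. ?e * A x y - phase_oracle h x y)"
      by (simp add: divide_right_mono)
  qed
qed

lemma cmod_phase_trace_le_sign_choice:
  assumes "cmod u = 1" and "u * phase_trace n A h = of_real (cmod (phase_trace n A h))"
    and "\<And>x. x \<in> cube n \<Longrightarrow> g x \<longleftrightarrow> Re (u * A x x) < 0"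
  shows "cmod (phase_trace n A h) \<le> cmod (phase_trace n A g)"
proof -
  have Re_rotated: "Re (u * phase_trace n A h') =
      (\<Sum>x\<in>cube n. if h' x then - Re (u * A x x) else Re (u * A x x))" for h'
    unfolding phase_trace_def by (auto simp: sum_distrib_left Re_sum if_distrib intro!: sum.cong)
  have "cmod (phase_trace n A h) = Re (u * phase_trace n A h)"
    using assms(2) by simp
  also have "\<dots> \<le> Re (u * phase_trace n A g)"
    unfolding Re_rotated by (rule sum_mono) (auto simp: assms(3))
  also have "\<dots> \<le> cmod (u * phase_trace n A g)" by (rule complex_Re_le_cmod)
  also have "\<dots> = cmod (phase_trace n A g)" using assms(1) by (simp add: norm_mult)
  finally show ?thesis .
qed

theorem mainTheorem4:
  fixes n k :: nat and \<epsilon> :: real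
    and f :: "(nat \<Rightarrow> bool) \<Rightarrow> bool"
    and V :: "(nat \<Rightarrow> bool) \<Rightarrow> (nat \<Rightarrow> bool) \<Rightarrow> complex"
  assumes "far_from_juntas n k \<epsilon> f"
    and "unitary_mat n V"
    and "quantum_junta n k V"
  shows "\<exists>g. bool_junta n k g \<and> qdist n V (phase_oracle g) \<le> qdist n V (phase_oracle f)"
proof -
  obtain S G where S: "S \<subseteq> {0..<n}" "card S = k"
    and diagonal: "\<And>x. x \<in> cube n \<Longrightarrow> V x x = G (restrict_bits S x)"
    using quantum_junta_diagonal[OF assms(3)] by blast
  obtain \<theta> where rotated: "exp (\<i> * of_real \<theta>) * phase_trace n V f = of_real (cmod (phase_trace n V f))"
    using exists_phase_rotating_to_modulus by blast
  define g where "g x = (Re (exp (\<i> * of_real \<theta>) * G (restrict_bits S x)) < 0)" for x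
  have "bool_junta n k g"
    unfolding g_def by (rule bool_junta_restrict_bits[OF S])
  moreover have "cmod (phase_trace n V f) \<le> cmod (phase_trace n V g)"
    by (rule cmod_phase_trace_le_sign_choice[OF _ rotated]) (simp_all add: g_def diagonal)
  hence "qdist n V (phase_oracle g) \<le> qdist n V (phase_oracle f)"
    unfolding qdist_phase_oracle by (intro mult_left_mono real_sqrt_le_mono) auto
  ultimately show ?thesis by blast
qed

end
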